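(* Let $\Gamma$ be a MaxSAT instance encoded with blocking variables, with $\mathrm{cost}(\Gamma)=k$, and let $A$ be the set of total assignments $\alpha$ with $\alpha\models\Gamma$ and $\mathrm{cost}(\alpha)=k$. Suppose (1) every two distinct assignments in $A$ have Hamming distance at least $d$, and (2) for every blocking variable $b$ there are $\alpha,\beta\in A$ with $\alpha(b)=0$ and $\beta(b)=1$. Then every derivation in the cost-SR calculus from $\Gamma$ that derives a unit clause $b$ for some blocking variable $b$ contains a clause $C$ introduced by the cost-SR rule whose witnessing substitution $\sigma$ satisfies $\mathrm{flip}(C,\sigma)\ge d$.
   Context: Literals, clauses, CNFs (multisets of clauses), $\mathrm{Var}(\Gamma)$. A substitution $\sigma$ maps each variable to $0$, $1$ or a literal, extended by $\sigma(\lnot x)=\lnot\sigma(x)$, $\sigma(0)=0$, $\sigma(1)=1$; $(\sigma\circ\tau)(x)=\sigma(\tau(x))$. A (partial) assignment has $\sigma(x)\in\{0,1,x\}$; total means all variables get Boolean values. $C{\upharpoonright}_\sigma$: apply $\sigma$ to each literal and simplify; $\sigma\models C$ if the result is $1$ or tautological; $\Gamma{\upharpoonright}_\sigma$ is the multiset of $C{\upharpoonright}_\sigma\neq1$ for $C\in\Gamma$. $\lnot C$ is the partial assignment falsifying all literals of $C$; $\tau\supseteq\rho$ means $\tau$ extends $\rho$. $\Gamma\vdash_1 C$ means unit propagation on $\Gamma{\upharpoonright}_{\lnot C}$ derives the empty clause; $\Gamma\vdash_1\Delta$ means $\Gamma\vdash_1 D$ for all $D\in\Delta$. A MaxSAT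 instance encoded with blocking variables is a CNF $\Gamma=H\cup\{C_1\lor b_1,\dots,C_m\lor b_m\}$ with distinct fresh variables $b_i$ (blocking variables). $\mathrm{cost}(\alpha)=\sum_i\alpha(b_i)$ for total $\alpha$; $\mathrm{cost}(\Gamma)=\min\{\mathrm{cost}(\alpha):\alpha\models\Gamma\}$. A clause $C$ is cost-SR w.r.t. $\Gamma$ via $\sigma$ if (1) $\Gamma{\upharpoonright}_{\lnot C}\vdash_1(\Gamma\cup\{C\}){\upharpoonright}_\sigma$ and (2) $\mathrm{cost}(\tau\circ\sigma)\le\mathrm{cost}(\tau)$ for all total $\tau\supseteq\lnot C$. A derivation in the cost-SR calculus from $\Gamma$ is a sequence $D_1,\dots,D_t$ where each $D_i$ is in $\Gamma$, or follows from earlier clauses by weakening or resolution, or is cost-SR (with an attached witnessing substitution) w.r.t. $\Gamma\cup\{D_1,\dots,D_{i-1}\}$ with $\mathrm{Var}(D_i)\subseteq\mathrm{Var}(\Gamma)$. For a clause $C$ derived by the cost-SR rule with witness $\sigma$, $\mathrm{flip}(C,\sigma)=\max_{\tau\supseteq\lnot C}\mathrm{HD}(\tau,\tau\circ\sigma)$ over total assignments $\tau$, where $\mathrm{HD}$ is the number of variables on which two total assignments differ. *)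

theory Defs
  imports Main "HOL-Library.Multiset"
begin

datatype 'v lit = Pos 'v | Neg 'v

fun neg_lit :: "'v lit \<Rightarrow> 'v lit" where
  "neg_lit (Pos x) = Neg x"
| "neg_lit (Neg x) = Pos x"

fun var_of :: "'v lit \<Rightarrow> 'v" where
  "var_of (Pos x) = x"
| "var_of (Neg x) = x"

type_synonym 'v clause = "'v lit set"
type_synonym 'v cnf = "'v clause multiset"

definition vars_clause :: "'v clause \<Rightarrow> 'v set" where
  "vars_clause C = var_of ` C"

definition vars_cnf :: "'v cnf \<Rightarrow> 'v set" where
  "vars_cnf \<Gamma> = (\<Union>C\<in>set_mset \<Gamma>. vars_clause C)"

datatype 'v val = Cst bool | Lit "'v lit"

type_synonym 'v subst = "'v \<Rightarrow> 'v val"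

fun neg_val :: "'v val \<Rightarrow> 'v val" where
  "neg_val (Cst b) = Cst (\<not> b)"
| "neg_val (Lit l) = Lit (neg_lit l)"

fun subst_lit :: "'v subst \<Rightarrow> 'v lit \<Rightarrow> 'v val" where
  "subst_lit \<sigma> (Pos x) = \<sigma> x"
| "subst_lit \<sigma> (Neg x) = neg_val (\<sigma> x)"

fun subst_val :: "'v subst \<Rightarrow> 'v val \<Rightarrow> 'v val" where
  "subst_val \<sigma> (Cst b) = Cst b"
| "subst_val \<sigma> (Lit l) = subst_lit \<sigma> l"

definition comp_subst :: "'v subst \<Rightarrow> 'v subst \<Rightarrow> 'v subst" where
  "comp_subst \<sigma> \<tau> = (\<lambda>x. subst_val \<sigma> (\<tau> x))"

definition total :: "'v subst \<Rightarrow> bool" where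
  "total \<alpha> \<longleftrightarrow> (\<forall>x. \<alpha> x = Cst True \<or> \<alpha> x = Cst False)"

text \<open>Restriction of a clause: None represents the result 1 (satisfied or tautological).\<close>
definition restrict_clause :: "'v clause \<Rightarrow> 'v subst \<Rightarrow> 'v clause option" where
  "restrict_clause C \<sigma> =
     (if (\<exists>l\<in>C. subst_lit \<sigma> l = Cst True)
         \<or> (\<exists>l\<in>C. \<exists>l'\<in>C. \<exists>m. subst_lit \<sigma> l = Lit m \<and> subst_lit \<sigma> l' = Lit (neg_lit m))
      then None
      else Some {m. \<exists>l\<in>C. subst_lit \<sigma> l = Lit m})"

definition models_clause :: "'v subst \<Rightarrow> 'v clause \<Rightarrow> bool" where
  "models_clause \<sigma> C \<longleftrightarrow> restrict_clause C \<sigma> = None"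

definition models :: "'v subst \<Rightarrow> 'v cnf \<Rightarrow> bool" where
  "models \<sigma> \<Gamma> \<longleftrightarrow> (\<forall>C\<in>#\<Gamma>. models_clause \<sigma> C)"

definition restrict_cnf :: "'v cnf \<Rightarrow> 'v subst \<Rightarrow> 'v cnf" where
  "restrict_cnf \<Gamma> \<sigma> = image_mset (\<lambda>C. the (restrict_clause C \<sigma>)) (filter_mset (\<lambda>C. restrict_clause C \<sigma> \<noteq> None) \<Gamma>)"

text \<open>The partial assignment falsifying all literals of C.\<close>
definition neg_clause :: "'v clause \<Rightarrow> 'v subst" where
  "neg_clause C = (\<lambda>x. if Pos x \<in> C then Cst False
                        else if Neg x \<in> C then Cst True
                        else Lit (Pos x))"

definition extends :: "'v subst \<Rightarrow> 'v subst \<Rightarrow> bool" where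
  "extends \<tau> \<rho> \<longleftrightarrow> (\<forall>x. \<rho> x \<noteq> Lit (Pos x) \<longrightarrow> \<tau> x = \<rho> x)"

inductive_set up_lits :: "'v cnf \<Rightarrow> 'v lit set" for F :: "'v cnf" where
  unit: "D \<in># F \<Longrightarrow> l \<in> D \<Longrightarrow> (\<forall>l'\<in>D - {l}. neg_lit l' \<in> up_lits F) \<Longrightarrow> l \<in> up_lits F"

definition up_conflict :: "'v cnf \<Rightarrow> bool" where
  "up_conflict F \<longleftrightarrow> (\<exists>D\<in>#F. \<forall>l\<in>D. neg_lit l \<in> up_lits F)"

definition up_implies :: "'v cnf \<Rightarrow> 'v clause \<Rightarrow> bool" where
  "up_implies \<Gamma> C \<longleftrightarrow> up_conflict (restrict_cnf \<Gamma> (neg_clause C))"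

definition up_implies_cnf :: "'v cnf \<Rightarrow> 'v cnf \<Rightarrow> bool" where
  "up_implies_cnf \<Gamma> \<Delta> \<longleftrightarrow> (\<forall>D\<in>#\<Delta>. up_implies \<Gamma> D)"

definition maxsat_cnf :: "'v cnf \<Rightarrow> 'v clause list \<Rightarrow> 'v list \<Rightarrow> 'v cnf" where
  "maxsat_cnf H Cs bs = H + mset (map2 (\<lambda>C b. insert (Pos b) C) Cs bs)"

definition blocking_encoding :: "'v cnf \<Rightarrow> 'v clause list \<Rightarrow> 'v list \<Rightarrow> bool" where
  "blocking_encoding H Cs bs \<longleftrightarrow>
     length Cs = length bs \<and> distinct bs \<and>
     (\<forall>b\<in>set bs. b \<notin> vars_cnf H \<and> (\<forall>C\<in>set Cs. b \<notin> vars_clause C))"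

definition cost :: "'v list \<Rightarrow> 'v subst \<Rightarrow> nat" where
  "cost bs \<alpha> = (\<Sum>b\<leftarrow>bs. if \<alpha> b = Cst True then 1 else 0)"

definition cost_cnf :: "'v list \<Rightarrow> 'v cnf \<Rightarrow> nat" where
  "cost_cnf bs \<Gamma> = (LEAST c. \<exists>\<alpha>. total \<alpha> \<and> models \<alpha> \<Gamma> \<and> cost bs \<alpha> = c)"

definition falsifying_totals :: "'v clause \<Rightarrow> 'v subst set" where
  "falsifying_totals C = {\<tau>. total \<tau> \<and> extends \<tau> (neg_clause C)}"

definition cost_sr :: "'v list \<Rightarrow> 'v cnf \<Rightarrow> 'v clause \<Rightarrow> 'v subst \<Rightarrow> bool" where
  "cost_sr bs \<Gamma> C \<sigma> \<longleftrightarrow>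
     up_implies_cnf (restrict_cnf \<Gamma> (neg_clause C)) (restrict_cnf (\<Gamma> + {#C#}) \<sigma>) \<and>
     (\<forall>\<tau>\<in>falsifying_totals C. cost bs (comp_subst \<tau> \<sigma>) \<le> cost bs \<tau>)"

datatype 'v justification = Axiom | Weaken nat | Resolve nat nat | CostSR "'v subst"

type_synonym 'v derivation = "('v clause \<times> 'v justification) list"

fun valid_step :: "'v list \<Rightarrow> 'v cnf \<Rightarrow> 'v clause list \<Rightarrow> 'v clause \<Rightarrow> 'v justification \<Rightarrow> bool" where
  "valid_step bs \<Gamma> prev D Axiom = (D \<in># \<Gamma>)"
| "valid_step bs \<Gamma> prev D (Weaken j) = (j < length prev \<and> prev ! j \<subseteq> D)"
| "valid_step bs \<Gamma> prev D (Resolve j k) =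
     (j < length prev \<and> k < length prev \<and>
      (\<exists>x. Pos x \<in> prev ! j \<and> Neg x \<in> prev ! k \<and>
           D = (prev ! j - {Pos x}) \<union> (prev ! k - {Neg x})))"
| "valid_step bs \<Gamma> prev D (CostSR \<sigma>) =
     (vars_clause D \<subseteq> vars_cnf \<Gamma> \<and> cost_sr bs (\<Gamma> + mset prev) D \<sigma>)"

definition derivation :: "'v list \<Rightarrow> 'v cnf \<Rightarrow> 'v derivation \<Rightarrow> bool" where
  "derivation bs \<Gamma> P \<longleftrightarrow>
     (\<forall>i<length P. valid_step bs \<Gamma> (map fst (take i P)) (fst (P ! i)) (snd (P ! i)))"

definition HD :: "'v subst \<Rightarrow> 'v subst \<Rightarrow> nat" where
  "HD \<alpha> \<beta> = card {x. \<alpha> x \<noteq> \<beta> x}"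

definition flip :: "'v clause \<Rightarrow> 'v subst \<Rightarrow> nat" where
  "flip C \<sigma> = Sup ((\<lambda>\<tau>. HD \<tau> (comp_subst \<tau> \<sigma>)) ` falsifying_totals C)"

end

theory Submission
  imports Defs
begin

text \<open>Call a total model of \<open>\<Gamma>\<close> of minimum cost optimal. Weakening and resolution are
  sound, so every optimal model satisfies the clauses they derive. If an optimal model \<open>\<alpha>\<close>
  falsifies a clause \<open>C\<close> introduced by cost-SR with witness \<open>\<sigma>\<close>, then \<open>\<alpha> \<circ> \<sigma>\<close> satisfies
  the formula extended by \<open>C\<close> at no greater cost, so it is an optimal model different from
  \<open>\<alpha>\<close>; hence \<open>d \<le> HD \<alpha> (\<alpha> \<circ> \<sigma>) \<le> flip C \<sigma>\<close>. So if every cost-SR step flips fewer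
  than \<open>d\<close> variables, all optimal models satisfy all derived clauses, which is impossible for
  a unit clause \<open>b\<close> because some optimal model sets \<open>b\<close> to 0.\<close>

lemma subst_lit_total:
  assumes "total \<alpha>" shows "\<exists>b. subst_lit \<alpha> l = Cst b"
proof -
  have "\<alpha> (var_of l) = Cst True \<or> \<alpha> (var_of l) = Cst False"
    using assms unfolding total_def by blast
  then show ?thesis by (cases l) auto
qed

lemma neg_lit_neg_lit [simp]: "neg_lit (neg_lit l) = l"
  by (cases l) simp_all

lemma neg_val_neg_val [simp]: "neg_val (neg_val v) = v"
  by (cases v) simp_all

lemma subst_lit_neg_lit: "subst_lit \<sigma> (neg_lit l) = neg_val (subst_lit \<sigma> l)"
  by (cases l) simp_all

lemma subst_lit_neg_lit_eq_Cst_iff [simp]: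
  "subst_lit \<sigma> (neg_lit l) = Cst b \<longleftrightarrow> subst_lit \<sigma> l = Cst (\<not> b)"
  by (cases "subst_lit \<sigma> l") (auto simp: subst_lit_neg_lit)

lemma subst_lit_comp_subst: "subst_lit (comp_subst \<alpha> \<sigma>) l = subst_val \<alpha> (subst_lit \<sigma> l)"
  by (cases l; cases "\<sigma> (var_of l)") (auto simp: comp_subst_def subst_lit_neg_lit)

lemma total_comp_subst:
  assumes "total \<alpha>" shows "total (comp_subst \<alpha> \<sigma>)"
  unfolding total_def
proof
  fix x
  obtain b where "subst_val \<alpha> (\<sigma> x) = Cst b"
    using assms subst_lit_total by (cases "\<sigma> x") auto
  then show "comp_subst \<alpha> \<sigma> x = Cst True \<or> comp_subst \<alpha> \<sigma> x = Cst False"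
    by (simp add: comp_subst_def)
qed

lemma models_clause_total_iff:
  assumes "total \<alpha>"
  shows "models_clause \<alpha> C \<longleftrightarrow> (\<exists>l\<in>C. subst_lit \<alpha> l = Cst True)"
proof -
  have "subst_lit \<alpha> l \<noteq> Lit m" for l m
    using subst_lit_total[OF assms, of l] by auto
  then show ?thesis unfolding models_clause_def restrict_clause_def by simp
qed

lemma models_plus_iff: "models \<alpha> (M + N) \<longleftrightarrow> models \<alpha> M \<and> models \<alpha> N"
  unfolding models_def by auto

lemma extends_neg_clause_if_not_models_clause:
  assumes "total \<alpha>" and "\<not> models_clause \<alpha> C"
  shows "extends \<alpha> (neg_clause C)"
proof -
  have total_x: "\<alpha> x = Cst True \<or> \<alpha> x = Cst False" for x
    using assms(1) unfolding total_def by blast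
  have false_lits: "subst_lit \<alpha> l \<noteq> Cst True" if "l \<in> C" for l
    using assms that models_clause_total_iff by blast
  have "\<alpha> x = Cst False" if "Pos x \<in> C" for x
    using total_x[of x] false_lits[OF that] by auto
  moreover have "\<alpha> x = Cst True" if "Neg x \<in> C" for x
    using total_x[of x] false_lits[OF that] by auto
  ultimately show ?thesis
    unfolding extends_def neg_clause_def by auto
qed

lemma neg_clause_partial: "neg_clause C x = Lit (Pos x) \<or> (\<exists>b. neg_clause C x = Cst b)"
  unfolding neg_clause_def by auto

lemma models_restrict_cnf:
  assumes tot: "total \<alpha>" and ext: "extends \<alpha> \<rho>"
    and partial: "\<And>x. \<rho> x = Lit (Pos x) \<or> (\<exists>b. \<rho> x = Cst b)"
    and "models \<alpha> F"
  shows "models \<alpha> (restrict_cnf F \<rho>)"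
  unfolding models_def
proof
  fix C' assume "C' \<in># restrict_cnf F \<rho>"
  then obtain C where C: "C \<in># F" and restr: "restrict_clause C \<rho> = Some C'"
    unfolding restrict_cnf_def by auto
  from restr have not_true: "\<forall>l\<in>C. subst_lit \<rho> l \<noteq> Cst True"
    and C': "C' = {m. \<exists>l\<in>C. subst_lit \<rho> l = Lit m}"
    unfolding restrict_clause_def by (auto split: if_splits)
  obtain l where l: "l \<in> C" "subst_lit \<alpha> l = Cst True"
    using \<open>models \<alpha> F\<close> C unfolding models_def models_clause_total_iff[OF tot] by blast
  have "subst_lit \<rho> l = Lit l"
  proof (cases "\<rho> (var_of l) = Lit (Pos (var_of l))")
    case True
    then show ?thesis by (cases l) auto
  next
    case False
    then have "subst_lit \<rho> l = subst_lit \<alpha> l"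
      using ext partial unfolding extends_def by (cases l) auto
    then show ?thesis using l not_true by auto
  qed
  then show "models_clause \<alpha> C'"
    using C' l models_clause_total_iff[OF tot] by auto
qed

lemma up_lits_true:
  assumes tot: "total \<alpha>" and "models \<alpha> G" and "l \<in> up_lits G"
  shows "subst_lit \<alpha> l = Cst True"
  using \<open>l \<in> up_lits G\<close>
proof (induction rule: up_lits.induct)
  case (unit D l)
  have "subst_lit \<alpha> l' \<noteq> Cst True" if "l' \<in> D - {l}" for l'
    using unit.IH that by auto
  moreover obtain l' where "l' \<in> D" "subst_lit \<alpha> l' = Cst True"
    using unit.hyps(1) \<open>models \<alpha> G\<close> unfolding models_def models_clause_total_iff[OF tot] by blast
  ultimately show ?case by blast
qed

lemma up_implies_sound:
  assumes tot: "total \<alpha>" and "models \<alpha> G" and "up_implies G D"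
  shows "models_clause \<alpha> D"
proof (rule ccontr)
  assume "\<not> models_clause \<alpha> D"
  let ?G' = "restrict_cnf G (neg_clause D)"
  have "extends \<alpha> (neg_clause D)"
    using extends_neg_clause_if_not_models_clause[OF tot \<open>\<not> models_clause \<alpha> D\<close>] .
  then have models_G': "models \<alpha> ?G'"
    using models_restrict_cnf[OF tot _ neg_clause_partial[of D] \<open>models \<alpha> G\<close>] by blast
  from \<open>up_implies G D\<close> obtain D' where D': "D' \<in># ?G'" "\<forall>l\<in>D'. neg_lit l \<in> up_lits ?G'"
    unfolding up_implies_def up_conflict_def by auto
  have "subst_lit \<alpha> l \<noteq> Cst True" if "l \<in> D'" for l
    using up_lits_true[OF tot models_G', of "neg_lit l"] D'(2) that by auto
  moreover have "models_clause \<alpha> D'" using models_G' D'(1) unfolding models_def by auto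
  ultimately show False using models_clause_total_iff[OF tot] by auto
qed

lemma models_comp_subst_if_models_restrict_cnf:
  assumes tot: "total \<alpha>" and "models \<alpha> (restrict_cnf G \<sigma>)"
  shows "models (comp_subst \<alpha> \<sigma>) G"
  unfolding models_def
proof
  fix C assume "C \<in># G"
  have sat_iff: "models_clause (comp_subst \<alpha> \<sigma>) C \<longleftrightarrow>
      (\<exists>l\<in>C. subst_val \<alpha> (subst_lit \<sigma> l) = Cst True)"
    using models_clause_total_iff[OF total_comp_subst[OF tot]] by (simp add: subst_lit_comp_subst)
  show "models_clause (comp_subst \<alpha> \<sigma>) C"
  proof (cases "restrict_clause C \<sigma>")
    case None
    then consider l where "l \<in> C" "subst_lit \<sigma> l = Cst True"
      | l l' m where "l \<in> C" "l' \<in> C" "subst_lit \<sigma> l = Lit m" "subst_lit \<sigma> l' = Lit (neg_lit m)"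
      unfolding restrict_clause_def by (auto split: if_splits)
    then show ?thesis
    proof cases
      case (1 l)
      then have "subst_val \<alpha> (subst_lit \<sigma> l) = Cst True" by simp
      then show ?thesis using 1 sat_iff by blast
    next
      case (2 l l' m)
      obtain c where "subst_lit \<alpha> m = Cst c" using subst_lit_total[OF tot] by blast
      then have "subst_val \<alpha> (subst_lit \<sigma> l) = Cst True \<or> subst_val \<alpha> (subst_lit \<sigma> l') = Cst True"
        using 2 by (cases c) (simp_all add: subst_lit_neg_lit)
      then show ?thesis using 2 sat_iff by blast
    qed
  next
    case (Some C')
    then have "C' \<in># restrict_cnf G \<sigma>"
      using \<open>C \<in># G\<close> unfolding restrict_cnf_def by (auto intro: image_eqI[where x = C])
    then obtain m where "m \<in> C'" and m_true: "subst_lit \<alpha> m = Cst True"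
      using assms(2) unfolding models_def models_clause_total_iff[OF tot] by blast
    moreover have "C' = {m. \<exists>l\<in>C. subst_lit \<sigma> l = Lit m}"
      using Some unfolding restrict_clause_def by (auto split: if_splits)
    ultimately obtain l where "l \<in> C" "subst_lit \<sigma> l = Lit m" by blast
    then have "subst_val \<alpha> (subst_lit \<sigma> l) = Cst True" using m_true by simp
    then show ?thesis using \<open>l \<in> C\<close> sat_iff by blast
  qed
qed

lemma models_resolvent:
  assumes tot: "total \<alpha>" and "models_clause \<alpha> C" and "models_clause \<alpha> D"
    and "Pos x \<in> C" and "Neg x \<in> D"
  shows "models_clause \<alpha> ((C - {Pos x}) \<union> (D - {Neg x}))"
proof -
  obtain l1 l2 where "l1 \<in> C" "subst_lit \<alpha> l1 = Cst True" "l2 \<in> D" "subst_lit \<alpha> l2 = Cst True"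
    using assms(2,3) unfolding models_clause_total_iff[OF tot] by blast
  moreover have "\<alpha> x = Cst True \<or> \<alpha> x = Cst False" using tot unfolding total_def by blast
  ultimately show ?thesis unfolding models_clause_total_iff[OF tot]
    by (elim disjE; cases "l1 = Pos x"; cases "l2 = Neg x") auto
qed
lemma valid_step_sound:
  assumes "valid_step bs \<Gamma> prev D j" and "\<forall>\<sigma>. j \<noteq> CostSR \<sigma>"
    and tot: "total \<alpha>" and "models \<alpha> (\<Gamma> + mset prev)"
  shows "models_clause \<alpha> D"
proof -
  have prev: "models_clause \<alpha> (prev ! i)" if "i < length prev" for i
    using \<open>models \<alpha> (\<Gamma> + mset prev)\<close> nth_mem[OF that] unfolding models_def by auto
  show ?thesis
  proof (cases j)
    case Axiom
    then show ?thesis using assms(1,4) unfolding models_def by auto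
  next
    case (Weaken i)
    then show ?thesis
      using assms(1) prev[of i] unfolding models_clause_total_iff[OF tot] by auto
  next
    case (Resolve i i')
    then show ?thesis using assms(1) prev models_resolvent[OF tot] by auto
  qed (use assms(2) in blast)
qed

lemma cost_sr_comp_subst_model:
  assumes "cost_sr bs F D \<sigma>" and tot: "total \<alpha>" and "models \<alpha> F"
    and "\<not> models_clause \<alpha> D"
  shows "models (comp_subst \<alpha> \<sigma>) (F + {#D#})" and "cost bs (comp_subst \<alpha> \<sigma>) \<le> cost bs \<alpha>"
proof -
  have ext: "extends \<alpha> (neg_clause D)"
    using extends_neg_clause_if_not_models_clause[OF tot \<open>\<not> models_clause \<alpha> D\<close>] .
  then have "models \<alpha> (restrict_cnf F (neg_clause D))"
    using models_restrict_cnf[OF tot _ neg_clause_partial[of D] \<open>models \<alpha> F\<close>] by blast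
  then have "models \<alpha> (restrict_cnf (F + {#D#}) \<sigma>)"
    using \<open>cost_sr bs F D \<sigma>\<close> up_implies_sound[OF tot]
    unfolding cost_sr_def up_implies_cnf_def models_def by blast
  then show "models (comp_subst \<alpha> \<sigma>) (F + {#D#})"
    by (rule models_comp_subst_if_models_restrict_cnf[OF tot])
  show "cost bs (comp_subst \<alpha> \<sigma>) \<le> cost bs \<alpha>"
    using \<open>cost_sr bs F D \<sigma>\<close> tot ext unfolding cost_sr_def falsifying_totals_def by blast
qed

definition optimal_models :: "'v list \<Rightarrow> 'v cnf \<Rightarrow> 'v subst set" where
  "optimal_models bs \<Gamma> = {\<alpha>. total \<alpha> \<and> models \<alpha> \<Gamma> \<and> cost bs \<alpha> = cost_cnf bs \<Gamma>}"

lemma cost_cnf_le: "total \<alpha> \<Longrightarrow> models \<alpha> \<Gamma> \<Longrightarrow> cost_cnf bs \<Gamma> \<le> cost bs \<alpha>"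
  unfolding cost_cnf_def by (rule Least_le) blast

lemma HD_le_flip:
  fixes \<tau> :: "('v::finite) subst"
  assumes "\<tau> \<in> falsifying_totals C"
  shows "HD \<tau> (comp_subst \<tau> \<sigma>) \<le> flip C \<sigma>"
  unfolding flip_def
proof (rule cSup_upper)
  show "HD \<tau> (comp_subst \<tau> \<sigma>) \<in> (\<lambda>\<tau>. HD \<tau> (comp_subst \<tau> \<sigma>)) ` falsifying_totals C"
    using assms by blast
  show "bdd_above ((\<lambda>\<tau>. HD \<tau> (comp_subst \<tau> \<sigma>)) ` falsifying_totals C)"
    by (rule bdd_aboveI[where M = "card (UNIV :: 'v set)"]) (auto simp: HD_def card_mono)
qed

lemma cost_sr_falsified_by_optimal_imp_flip_ge:
  fixes \<Gamma> :: "('v::finite) cnf"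
  assumes sr: "cost_sr bs (\<Gamma> + \<Delta>) D \<sigma>" and opt: "\<alpha> \<in> optimal_models bs \<Gamma>"
    and "models \<alpha> \<Delta>" and "\<not> models_clause \<alpha> D"
    and dist: "\<forall>\<alpha>\<in>optimal_models bs \<Gamma>. \<forall>\<beta>\<in>optimal_models bs \<Gamma>. \<alpha> \<noteq> \<beta> \<longrightarrow> d \<le> HD \<alpha> \<beta>"
  shows "d \<le> flip D \<sigma>"
proof -
  let ?\<beta> = "comp_subst \<alpha> \<sigma>"
  have tot: "total \<alpha>" and "models \<alpha> (\<Gamma> + \<Delta>)"
    using opt \<open>models \<alpha> \<Delta>\<close> unfolding optimal_models_def models_plus_iff by auto
  note repaired = cost_sr_comp_subst_model[OF sr tot this(2) \<open>\<not> models_clause \<alpha> D\<close>]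
  have "models ?\<beta> \<Gamma>" and "models_clause ?\<beta> D"
    using repaired(1) unfolding models_plus_iff by (auto simp: models_def)
  then have "?\<beta> \<in> optimal_models bs \<Gamma>"
    using repaired(2) opt cost_cnf_le[OF total_comp_subst[OF tot]]
    unfolding optimal_models_def by (auto intro: total_comp_subst[OF tot] antisym)
  moreover have "\<alpha> \<noteq> ?\<beta>" using \<open>models_clause ?\<beta> D\<close> \<open>\<not> models_clause \<alpha> D\<close> by auto
  ultimately have "d \<le> HD \<alpha> ?\<beta>" using dist opt by blast
  also have "\<dots> \<le> flip D \<sigma>"
    using HD_le_flip tot extends_neg_clause_if_not_models_clause[OF tot \<open>\<not> models_clause \<alpha> D\<close>]
    unfolding falsifying_totals_def by blast
  finally show ?thesis .
qed

lemma derivation_satisfied_by_optimal_models: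
  fixes \<Gamma> :: "('v::finite) cnf"
  assumes der: "derivation bs \<Gamma> P"
    and dist: "\<forall>\<alpha>\<in>optimal_models bs \<Gamma>. \<forall>\<beta>\<in>optimal_models bs \<Gamma>. \<alpha> \<noteq> \<beta> \<longrightarrow> d \<le> HD \<alpha> \<beta>"
    and small_flips: "\<forall>i<length P. \<forall>\<sigma>. snd (P ! i) = CostSR \<sigma> \<longrightarrow> flip (fst (P ! i)) \<sigma> < d"
    and opt: "\<alpha> \<in> optimal_models bs \<Gamma>"
  shows "i < length P \<Longrightarrow> models_clause \<alpha> (fst (P ! i))"
proof (induction i rule: less_induct)
  case (less i)
  let ?prev = "map fst (take i P)"
  have tot: "total \<alpha>" and "models \<alpha> \<Gamma>" using opt unfolding optimal_models_def by auto
  have "models_clause \<alpha> C" if "C \<in> set ?prev" for C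
  proof -
    obtain j where "j < i" "j < length P" "C = fst (P ! j)"
      using \<open>C \<in> set ?prev\<close> by (auto simp: in_set_conv_nth)
    then show ?thesis using less.IH by blast
  qed
  then have "models \<alpha> (mset ?prev)" unfolding models_def by simp
  then have models_prev: "models \<alpha> (\<Gamma> + mset ?prev)"
    using \<open>models \<alpha> \<Gamma>\<close> models_plus_iff by blast
  have step: "valid_step bs \<Gamma> ?prev (fst (P ! i)) (snd (P ! i))"
    using der less.prems unfolding derivation_def by blast
  show ?case
  proof (cases "\<exists>\<sigma>. snd (P ! i) = CostSR \<sigma>")
    case True
    then obtain \<sigma> where \<sigma>: "snd (P ! i) = CostSR \<sigma>" by blast
    then have "cost_sr bs (\<Gamma> + mset ?prev) (fst (P ! i)) \<sigma>" using step by simp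
    then show ?thesis
      using cost_sr_falsified_by_optimal_imp_flip_ge[OF _ opt \<open>models \<alpha> (mset ?prev)\<close> _ dist]
        small_flips less.prems \<sigma> by fastforce
  next
    case False
    then show ?thesis using valid_step_sound[OF step _ tot models_prev] by blast
  qed
qed

theorem theorem5p1:
  fixes H :: "('v::finite) cnf" and Cs :: "'v clause list" and bs :: "'v list"
    and A :: "'v subst set" and k d :: nat and P :: "'v derivation"
  assumes enc: "blocking_encoding H Cs bs"
    and costk: "cost_cnf bs (maxsat_cnf H Cs bs) = k"
    and A_def: "A = {\<alpha>. total \<alpha> \<and> models \<alpha> (maxsat_cnf H Cs bs) \<and> cost bs \<alpha> = k}"
    and dist: "\<forall>\<alpha>\<in>A. \<forall>\<beta>\<in>A. \<alpha> \<noteq> \<beta> \<longrightarrow> d \<le> HD \<alpha> \<beta>"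
    and both: "\<forall>b\<in>set bs. \<exists>\<alpha>\<in>A. \<exists>\<beta>\<in>A. \<alpha> b = Cst False \<and> \<beta> b = Cst True"
    and der: "derivation bs (maxsat_cnf H Cs bs) P"
    and unit: "\<exists>b\<in>set bs. \<exists>j<length P. fst (P ! j) = {Pos b}"
  shows "\<exists>i<length P. \<exists>\<sigma>. snd (P ! i) = CostSR \<sigma> \<and> d \<le> flip (fst (P ! i)) \<sigma>"
proof (rule ccontr)
  assume "\<not> ?thesis"
  then have small_flips: "\<forall>i<length P. \<forall>\<sigma>. snd (P ! i) = CostSR \<sigma> \<longrightarrow> flip (fst (P ! i)) \<sigma> < d"
    by (auto simp: not_le)
  have A_opt: "A = optimal_models bs (maxsat_cnf H Cs bs)"
    unfolding A_def optimal_models_def costk ..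
  obtain b j where "b \<in> set bs" "j < length P" "fst (P ! j) = {Pos b}" using unit by blast
  then obtain \<alpha> where "\<alpha> \<in> A" "\<alpha> b = Cst False" using both by blast
  have "models_clause \<alpha> {Pos b}"
    using derivation_satisfied_by_optimal_models[OF der dist[unfolded A_opt] small_flips]
      \<open>\<alpha> \<in> A\<close> \<open>j < length P\<close> \<open>fst (P ! j) = {Pos b}\<close> unfolding A_opt by metis
  then show False
    using \<open>\<alpha> \<in> A\<close> \<open>\<alpha> b = Cst False\<close> models_clause_total_iff unfolding A_def by fastforce
qed

end
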